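(* Let $R$ be a commutative ring, $n\ge m\ge1$, and $f(t)=a_0+a_1t+\cdots+a_nt^n$, $g(t)=b_0+b_1t+\cdots+b_mt^m$ in $R[t]$. Suppose there is a nonzero divisor $d\in R$, $d\neq 0$, with $\langle a_n,b_m\rangle=\langle d\rangle$. Then for each $j=0,\ldots,m-1$ there is an exact sequence of $R$-modules $$R/\langle d\rangle\to\mathrm{coker}(\psi_{j+1})\to\mathrm{coker}(\psi_j)\to R/\langle d\rangle\to0.$$ In particular, if $d=1$ then $\mathrm{coker}(\psi_j)\cong\mathrm{coker}(\psi_k)$ for all $j,k\in\{0,\ldots,m\}$.
   Context: For $k=0,\ldots,m-1$ put $f_k(t)=a_nt^{n-m+k}+a_{n-1}t^{n-m+k-1}+\cdots+a_{m-k}$, $g_k(t)=b_mt^k+b_{m-1}t^{k-1}+\cdots+b_{m-k}$, and $p_k(t)=g_k(t)f(t)-f_k(t)g(t)$ (of degree $\le n-1$). $R[t]_{\le e}$ denotes polynomials of degree $\le e$. For $j\in\{0,\ldots,m\}$, $\psi_j:R^j\oplus R[t]_{\le m-j-1}\oplus R[t]_{\le n-j-1}\to R[t]_{\le m+n-j-1}$ is the $R$-linear map sending the $i$-th standard basis vector $e_i$ of $R^j$ ($1\le i\le j$) to $p_{m-j+i-1}(t)$ and $(0,a(t),b(t))$ to $a(t)f(t)+b(t)g(t)$. ($\psi_0$ is the Sylvester map, $\psi_m$ the hybrid Bézout map.) *)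

theory Defs
  imports "HOL-Computational_Algebra.Polynomial"
begin

text \<open>R[t]_{<= e-1}: polynomials all of whose coefficients of index >= e vanish
  (so polys_lt 0 = {0}).\<close>
definition polys_lt :: "nat \<Rightarrow> 'a::zero poly set" where
  "polys_lt e = {p. \<forall>i\<ge>e. coeff p i = 0}"

definition f_k :: "nat \<Rightarrow> nat \<Rightarrow> 'a::comm_ring_1 poly \<Rightarrow> nat \<Rightarrow> 'a poly" where
  "f_k n m f k = (\<Sum>i\<le>n - m + k. monom (coeff f (m - k + i)) i)"

definition g_k :: "nat \<Rightarrow> 'a::comm_ring_1 poly \<Rightarrow> nat \<Rightarrow> 'a poly" where
  "g_k m g k = (\<Sum>i\<le>k. monom (coeff g (m - k + i)) i)"

definition p_k :: "nat \<Rightarrow> nat \<Rightarrow> 'a::comm_ring_1 poly \<Rightarrow> 'a poly \<Rightarrow> nat \<Rightarrow> 'a poly" where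
  "p_k n m f g k = g_k m g k * f - f_k n m f k * g"

text \<open>Domain of psi_j: R^j (functions supported on {1..j}) x R[t]_{<= m-j-1} x R[t]_{<= n-j-1}.\<close>
definition psi_dom :: "nat \<Rightarrow> nat \<Rightarrow> nat \<Rightarrow> ((nat \<Rightarrow> 'a::comm_ring_1) \<times> 'a poly \<times> 'a poly) set" where
  "psi_dom n m j = {(c, a, b). (\<forall>i. c i \<noteq> 0 \<longrightarrow> i \<in> {1..j}) \<and> a \<in> polys_lt (m - j) \<and> b \<in> polys_lt (n - j)}"

definition psi :: "nat \<Rightarrow> nat \<Rightarrow> 'a::comm_ring_1 poly \<Rightarrow> 'a poly \<Rightarrow> nat
    \<Rightarrow> (nat \<Rightarrow> 'a) \<times> 'a poly \<times> 'a poly \<Rightarrow> 'a poly" where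
  "psi n m f g j = (\<lambda>(c, a, b). (\<Sum>i\<in>{1..j}. smult (c i) (p_k n m f g (m - j + i - 1))) + a * f + b * g)"

text \<open>coker(psi_j) is presented as the quotient coker_M / coker_N.\<close>
definition coker_M :: "nat \<Rightarrow> nat \<Rightarrow> nat \<Rightarrow> 'a::comm_ring_1 poly set" where
  "coker_M n m j = polys_lt (m + n - j)"

definition coker_N :: "nat \<Rightarrow> nat \<Rightarrow> 'a::comm_ring_1 poly \<Rightarrow> 'a poly \<Rightarrow> nat \<Rightarrow> 'a poly set" where
  "coker_N n m f g j = psi n m f g j ` psi_dom n m j"

text \<open>The ideal <d>, so that R/<d> is presented as UNIV / principal_ideal d.\<close>
definition principal_ideal :: "'a::comm_ring_1 \<Rightarrow> 'a set" where
  "principal_ideal d = {z * d | z. True}"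

text \<open>An R-module homomorphism M1/N1 -> M2/N2 between quotient modules, given by an
  R-linear lift h (ambient modules with scalar actions s1, s2).\<close>
definition qhom :: "('r \<Rightarrow> 'b::ab_group_add \<Rightarrow> 'b) \<Rightarrow> 'b set \<Rightarrow> 'b set
    \<Rightarrow> ('r \<Rightarrow> 'c::ab_group_add \<Rightarrow> 'c) \<Rightarrow> 'c set \<Rightarrow> 'c set \<Rightarrow> ('b \<Rightarrow> 'c) \<Rightarrow> bool" where
  "qhom s1 M1 N1 s2 M2 N2 h \<longleftrightarrow>
     (\<forall>x y. h (x + y) = h x + h y) \<and> (\<forall>r x. h (s1 r x) = s2 r (h x)) \<and>
     h ` M1 \<subseteq> M2 \<and> h ` N1 \<subseteq> N2"

text \<open>Exactness at M2/N2 of M1/N1 --h--> M2/N2 --k--> M3/N3: ker = im.\<close>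
definition qexact :: "'b set \<Rightarrow> 'c::ab_group_add set \<Rightarrow> 'c set \<Rightarrow> 'd set \<Rightarrow>
    ('b \<Rightarrow> 'c) \<Rightarrow> ('c \<Rightarrow> 'd) \<Rightarrow> bool" where
  "qexact M1 M2 N2 N3 h k \<longleftrightarrow> (\<forall>x\<in>M2. k x \<in> N3 \<longleftrightarrow> (\<exists>y\<in>M1. x - h y \<in> N2))"

definition qsurj :: "'c set \<Rightarrow> 'd::ab_group_add set \<Rightarrow> 'd set \<Rightarrow> ('c \<Rightarrow> 'd) \<Rightarrow> bool" where
  "qsurj M2 M3 N3 k \<longleftrightarrow> (\<forall>z\<in>M3. \<exists>x\<in>M2. z - k x \<in> N3)"

definition qiso :: "('r \<Rightarrow> 'b::ab_group_add \<Rightarrow> 'b) \<Rightarrow> 'b set \<Rightarrow> 'b set \<Rightarrow> 'b set \<Rightarrow> 'b set \<Rightarrow> bool" where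
  "qiso s M1 N1 M2 N2 \<longleftrightarrow> (\<exists>h h'. qhom s M1 N1 s M2 N2 h \<and> qhom s M2 N2 s M1 N1 h' \<and>
     (\<forall>x\<in>M1. h' (h x) - x \<in> N1) \<and> (\<forall>y\<in>M2. h (h' y) - y \<in> N2))"

end

theory Submission
  imports Defs
begin

(* Write N_j = im psi_j and M_j = R[t]_{< m+n-j}, so that coker psi_j = M_j / N_j,
   and let e_j = m+n-j-1 be the top coefficient index of M_j (thus M_(j+1) = R[t]_{< e_j}).
   From <a_n, b_m> = <d> with d a nonzerodivisor we get a_n = alpha d, b_m = beta d and
   x0 alpha + y0 beta = 1.  For j < m the exact sequence is
      R/<d> --(w |-> w Q_j)--> M_(j+1)/N_(j+1) --(inclusion)--> M_j/N_j --(coeff e_j)--> R/<d> --> 0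
   with Q_j = beta t^(m-j-1) f - alpha t^(n-j-1) g.  The key structural facts about the images are
   N_(j+1) <= N_j and: every element of N_j is congruent modulo N_(j+1) to some
   u t^(m-j-1) f + v t^(n-j-1) g, whose coefficient at e_j is u a_n + v b_m = (u alpha + v beta) d.
   Exactness then reduces to the fact that the syzygies of the unimodular pair (alpha, beta) are the
   multiples of (beta, -alpha).  For d = 1 the inclusion has the explicit inverse
   x |-> x - x_(e_j) (x0 t^(m-j-1) f + y0 t^(n-j-1) g), and chaining these isomorphisms gives
   coker psi_j = coker psi_k. *)

lemma polys_lt_Suc: "p \<in> polys_lt (Suc e) \<longleftrightarrow> degree p \<le> e"
  unfolding polys_lt_def by (auto intro: degree_le coeff_eq_0)

lemma polys_lt_0: "p \<in> polys_lt 0 \<longleftrightarrow> p = 0"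
  unfolding polys_lt_def by (auto simp: poly_eq_iff)

lemma polys_lt_mono: "p \<in> polys_lt e \<Longrightarrow> e \<le> e' \<Longrightarrow> p \<in> polys_lt e'"
  unfolding polys_lt_def by auto

lemma polys_lt_zero: "0 \<in> polys_lt e"
  unfolding polys_lt_def by auto

lemma polys_lt_add: "p \<in> polys_lt e \<Longrightarrow> q \<in> polys_lt e \<Longrightarrow> p + q \<in> polys_lt e"
  unfolding polys_lt_def by auto

lemma polys_lt_diff:
  fixes p q :: "'a::ab_group_add poly"
  shows "p \<in> polys_lt e \<Longrightarrow> q \<in> polys_lt e \<Longrightarrow> p - q \<in> polys_lt e"
  unfolding polys_lt_def by auto

lemma polys_lt_smult: "p \<in> polys_lt e \<Longrightarrow> smult r p \<in> polys_lt e"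
  unfolding polys_lt_def by auto

lemma polys_lt_monom: "i < e \<Longrightarrow> monom c i \<in> polys_lt e"
  unfolding polys_lt_def by (auto simp: coeff_monom)

lemma polys_lt_sum: "(\<And>x. x \<in> S \<Longrightarrow> P x \<in> polys_lt e) \<Longrightarrow> sum P S \<in> polys_lt e"
  unfolding polys_lt_def by (simp add: coeff_sum)

lemma polys_lt_coeff: "p \<in> polys_lt e \<Longrightarrow> e \<le> i \<Longrightarrow> coeff p i = 0"
  unfolding polys_lt_def by auto

lemma polys_lt_drop_top: "p \<in> polys_lt (Suc e) \<Longrightarrow> coeff p e = 0 \<Longrightarrow> p \<in> polys_lt e"
  unfolding polys_lt_def using le_SucE by blast

lemma polys_lt_mult:
  fixes p q :: "'a::comm_semiring_0 poly"
  assumes "p \<in> polys_lt e" and "q \<in> polys_lt e'"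
  shows "p * q \<in> polys_lt (e + e' - 1)"
proof (cases "e = 0 \<or> e' = 0")
  case True
  then show ?thesis using assms by (auto simp: polys_lt_0 polys_lt_zero)
next
  case False
  then obtain k k' where e: "e = Suc k" "e' = Suc k'" by (metis not0_implies_Suc)
  then have "degree p \<le> k" "degree q \<le> k'" using assms by (simp_all add: polys_lt_Suc)
  then have "degree (p * q) \<le> k + k'" by (meson add_mono degree_mult_le order_trans)
  then show ?thesis using e polys_lt_Suc[of "p * q" "k + k'"] by simp
qed

lemma coeff_f_k: "coeff (f_k n m f k) i = (if i \<le> n - m + k then coeff f (m - k + i) else 0)"
  unfolding f_k_def by (simp add: coeff_sum coeff_monom)

lemma coeff_g_k: "coeff (g_k m g k) i = (if i \<le> k then coeff g (m - k + i) else 0)"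
  unfolding g_k_def by (simp add: coeff_sum coeff_monom)

lemma f_k_in_polys_lt: "f_k n m f k \<in> polys_lt (Suc (n - m + k))"
  unfolding polys_lt_def by (auto simp: coeff_f_k)

lemma g_k_in_polys_lt: "g_k m g k \<in> polys_lt (Suc k)"
  unfolding polys_lt_def by (auto simp: coeff_g_k)

lemma smult_sum_right: "smult r (sum h S) = (\<Sum>i\<in>S. smult r (h i))"
  by (induction S rule: infinite_finite_induct) (auto simp: smult_add_right)

lemma psi_apply:
  "psi n m f g j (c, a, b) = (\<Sum>i\<in>{1..j}. smult (c i) (p_k n m f g (m - j + i - 1))) + a * f + b * g"
  by (simp add: psi_def)

lemma psi_dom_iff:
  "(c, a, b) \<in> psi_dom n m j \<longleftrightarrow>
     (\<forall>i. c i \<noteq> 0 \<longrightarrow> i \<in> {1..j}) \<and> a \<in> polys_lt (m - j) \<and> b \<in> polys_lt (n - j)"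
  by (simp add: psi_dom_def)

lemma coker_N_I: "(c, a, b) \<in> psi_dom n m j \<Longrightarrow> psi n m f g j (c, a, b) \<in> coker_N n m f g j"
  unfolding coker_N_def by blast

lemma coker_N_E:
  assumes "x \<in> coker_N n m f g j"
  obtains c a b where "(c, a, b) \<in> psi_dom n m j" and "x = psi n m f g j (c, a, b)"
  using assms unfolding coker_N_def by auto

lemma coker_N_ab:
  "a \<in> polys_lt (m - j) \<Longrightarrow> b \<in> polys_lt (n - j) \<Longrightarrow> a * f + b * g \<in> coker_N n m f g j"
  using coker_N_I[of "\<lambda>_. 0" a b n m j f g] by (simp add: psi_dom_iff psi_apply)

lemma coker_N_zero: "0 \<in> coker_N n m f g j"
  using coker_N_ab[of 0 m j 0 n f g] by (simp add: polys_lt_zero)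

lemma coker_N_diff:
  assumes "x \<in> coker_N n m f g j" and "y \<in> coker_N n m f g j"
  shows "x - y \<in> coker_N n m f g j"
proof -
  obtain c a b where x: "(c, a, b) \<in> psi_dom n m j" "x = psi n m f g j (c, a, b)"
    using assms(1) by (rule coker_N_E)
  obtain c' a' b' where y: "(c', a', b') \<in> psi_dom n m j" "y = psi n m f g j (c', a', b')"
    using assms(2) by (rule coker_N_E)
  have "(\<lambda>i. c i - c' i, a - a', b - b') \<in> psi_dom n m j"
    using x y by (auto simp: psi_dom_iff intro: polys_lt_diff) (metis diff_self)+
  moreover have "x - y = psi n m f g j (\<lambda>i. c i - c' i, a - a', b - b')"
    unfolding x y psi_apply by (simp add: smult_diff_left sum_subtractf algebra_simps)
  ultimately show ?thesis by (simp add: coker_N_I)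
qed

lemma coker_N_smult:
  assumes "x \<in> coker_N n m f g j"
  shows "smult r x \<in> coker_N n m f g j"
proof -
  obtain c a b where x: "(c, a, b) \<in> psi_dom n m j" "x = psi n m f g j (c, a, b)"
    using assms by (rule coker_N_E)
  have "(\<lambda>i. r * c i, smult r a, smult r b) \<in> psi_dom n m j"
    using x by (auto simp: psi_dom_iff intro: polys_lt_smult) (metis mult_zero_right)+
  moreover have "smult r x = psi n m f g j (\<lambda>i. r * c i, smult r a, smult r b)"
    unfolding x psi_apply by (simp add: smult_sum_right smult_add_right)
  ultimately show ?thesis by (simp add: coker_N_I)
qed

lemma coker_N_add:
  assumes "x \<in> coker_N n m f g j" and "y \<in> coker_N n m f g j"
  shows "x + y \<in> coker_N n m f g j"
  using coker_N_diff[OF assms(1) coker_N_diff[OF coker_N_zero assms(2)]] by simp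

(* Peeling off the first generator p_(m-j-1) of psi_(j+1) leaves psi_j with shifted coefficients;
   this reindexing underlies both N_(j+1) <= N_j and the decomposition of N_j. *)
lemma psi_Suc:
  assumes "j < m"
  shows "psi n m f g (Suc j) (c, a, b) =
    smult (c 1) (p_k n m f g (m - Suc j)) + psi n m f g j (\<lambda>i. if i = 0 then 0 else c (Suc i), a, b)"
proof -
  let ?P = "p_k n m f g"
  have "(\<Sum>i\<in>{1..Suc j}. smult (c i) (?P (m - Suc j + i - 1)))
      = smult (c 1) (?P (m - Suc j)) + (\<Sum>i\<in>{Suc 1..Suc j}. smult (c i) (?P (m - Suc j + i - 1)))"
    by (subst sum.atLeast_Suc_atMost) auto
  also have "(\<Sum>i\<in>{Suc 1..Suc j}. smult (c i) (?P (m - Suc j + i - 1)))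
      = (\<Sum>i\<in>{1..j}. smult (c (Suc i)) (?P (m - Suc j + Suc i - 1)))"
    by (rule sum.shift_bounds_cl_Suc_ivl)
  also have "\<dots> = (\<Sum>i\<in>{1..j}. smult (if i = 0 then 0 else c (Suc i)) (?P (m - j + i - 1)))"
    by (rule sum.cong) (use assms in auto)
  finally show ?thesis by (simp add: psi_apply add.assoc)
qed

lemma qhom_cong:
  assumes "qhom s1 M1 N1 s2 M2 N2 h" and "x - y \<in> N1"
  shows "h x - h y \<in> N2"
proof -
  have "additive h"
    using assms(1) unfolding qhom_def by (intro additive.intro) (elim conjE, rule spec2)
  then have "h x - h y = h (x - y)" by (rule additive.diff[symmetric])
  moreover have "h ` N1 \<subseteq> N2" using assms(1) unfolding qhom_def by (elim conjE)
  ultimately show ?thesis using assms(2) by auto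
qed

lemma qiso_refl:
  assumes "0 \<in> N"
  shows "qiso s M N M N"
proof -
  have "qhom s M N s M N id" unfolding qhom_def by simp
  then show ?thesis unfolding qiso_def using assms by (intro exI[of _ id] conjI) simp_all
qed

lemma qiso_sym: "qiso s M1 N1 M2 N2 \<Longrightarrow> qiso s M2 N2 M1 N1"
  unfolding qiso_def by blast

lemma qiso_trans:
  assumes add1: "\<And>x y. x \<in> N1 \<Longrightarrow> y \<in> N1 \<Longrightarrow> x + y \<in> N1"
    and add3: "\<And>x y. x \<in> N3 \<Longrightarrow> y \<in> N3 \<Longrightarrow> x + y \<in> N3"
    and "qiso s M1 N1 M2 N2" and "qiso s M2 N2 M3 N3"
  shows "qiso s M1 N1 M3 N3"
proof -
  obtain h1 h1' where h1: "qhom s M1 N1 s M2 N2 h1" "qhom s M2 N2 s M1 N1 h1'"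
    "\<forall>x\<in>M1. h1' (h1 x) - x \<in> N1" "\<forall>y\<in>M2. h1 (h1' y) - y \<in> N2"
    using assms(3) unfolding qiso_def by blast
  obtain h2 h2' where h2: "qhom s M2 N2 s M3 N3 h2" "qhom s M3 N3 s M2 N2 h2'"
    "\<forall>x\<in>M2. h2' (h2 x) - x \<in> N2" "\<forall>y\<in>M3. h2 (h2' y) - y \<in> N3"
    using assms(4) unfolding qiso_def by blast
  have "qhom s M1 N1 s M3 N3 (h2 \<circ> h1)" "qhom s M3 N3 s M1 N1 (h1' \<circ> h2')"
    using h1(1,2) h2(1,2) unfolding qhom_def by (auto simp: image_subset_iff)
  moreover have "h1' (h2' (h2 (h1 x))) - x \<in> N1" if x: "x \<in> M1" for x
  proof -
    have "h1 x \<in> M2" using h1(1) x unfolding qhom_def by auto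
    then have "h1' (h2' (h2 (h1 x))) - h1' (h1 x) \<in> N1" using h1(2) h2(3) by (blast intro: qhom_cong)
    from add1[OF this] show ?thesis using h1(3) x by fastforce
  qed
  moreover have "h2 (h1 (h1' (h2' y))) - y \<in> N3" if y: "y \<in> M3" for y
  proof -
    have "h2' y \<in> M2" using h2(2) y unfolding qhom_def by auto
    then have "h2 (h1 (h1' (h2' y))) - h2 (h2' y) \<in> N3" using h2(1) h1(4) by (blast intro: qhom_cong)
    from add3[OF this] show ?thesis using h2(4) y by fastforce
  qed
  ultimately show ?thesis unfolding qiso_def comp_def by blast
qed

lemma qiso_chain:
  assumes zero: "\<And>j. 0 \<in> N j"
    and add: "\<And>j x y. x \<in> N j \<Longrightarrow> y \<in> N j \<Longrightarrow> x + y \<in> N j"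
    and step: "\<And>j. j < m \<Longrightarrow> qiso s (M (Suc j)) (N (Suc j)) (M j) (N j)"
    and "j \<le> m" and "k \<le> m"
  shows "qiso s (M j) (N j) (M k) (N k)"
proof -
  have to_0: "qiso s (M i) (N i) (M 0) (N 0)" if "i \<le> m" for i
    using that
  proof (induction i)
    case 0
    show ?case by (rule qiso_refl[OF zero])
  next
    case (Suc i)
    then show ?case using step qiso_trans[OF add add] by (metis Suc_le_lessD less_imp_le)
  qed
  show ?thesis
    using to_0[OF assms(4)] qiso_sym[OF to_0[OF assms(5)]] qiso_trans[OF add add] by blast
qed

(* If <a, b> = <d> with d a nonzerodivisor, then a = alpha d, b = beta d with <alpha, beta> = R;
   the Bezout relation is obtained by cancelling d. *)
lemma principal_generator_cofactors:
  fixes a b d :: "'a::comm_ring_1"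
  assumes nzd: "\<forall>x. d * x = 0 \<longrightarrow> x = 0"
    and ideal: "{x * a + y * b | x y. True} = principal_ideal d"
  obtains \<alpha> \<beta> x0 y0 where "a = \<alpha> * d" and "b = \<beta> * d" and "x0 * \<alpha> + y0 * \<beta> = 1"
proof -
  have "1 * a + 0 * b \<in> principal_ideal d" using ideal by blast
  then obtain \<alpha> where \<alpha>: "a = \<alpha> * d" unfolding principal_ideal_def by auto
  have "0 * a + 1 * b \<in> principal_ideal d" using ideal by blast
  then obtain \<beta> where \<beta>: "b = \<beta> * d" unfolding principal_ideal_def by auto
  have "1 * d \<in> principal_ideal d" unfolding principal_ideal_def by blast
  then obtain x0 y0 where "1 * d = x0 * a + y0 * b" using ideal by blast
  then have "d * ((x0 * \<alpha> + y0 * \<beta>) - 1) = 0" by (simp add: \<alpha> \<beta> algebra_simps)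
  then have "x0 * \<alpha> + y0 * \<beta> = 1" using nzd by auto
  with \<alpha> \<beta> that show ?thesis by blast
qed

lemma unimodular_syzygy:
  fixes \<alpha> \<beta> :: "'a::comm_ring_1"
  assumes bezout: "x0 * \<alpha> + y0 * \<beta> = 1" and syz: "u * \<alpha> + v * \<beta> = 0"
  shows "u = (u * y0 - v * x0) * \<beta>" and "v = (u * y0 - v * x0) * - \<alpha>"
proof -
  have "u = u * (x0 * \<alpha> + y0 * \<beta>) - x0 * (u * \<alpha> + v * \<beta>)" using bezout syz by simp
  then show "u = (u * y0 - v * x0) * \<beta>" by (simp add: algebra_simps)
  have "v = v * (x0 * \<alpha> + y0 * \<beta>) - y0 * (u * \<alpha> + v * \<beta>)" using bezout syz by simp
  then show "v = (u * y0 - v * x0) * - \<alpha>" by (simp add: algebra_simps)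
qed

locale sylvester_pair =
  fixes f g :: "'a::comm_ring_1 poly" and n m :: nat
  assumes m_le_n: "m \<le> n" and degree_f: "degree f \<le> n" and degree_g: "degree g \<le> m"
begin

lemma f_minus_f_k: "k \<le> m \<Longrightarrow> f - monom 1 (m - k) * f_k n m f k \<in> polys_lt (m - k)"
  unfolding polys_lt_def
  using m_le_n degree_f by (auto simp: coeff_monom_mult coeff_f_k coeff_eq_0)

lemma g_minus_g_k: "k \<le> m \<Longrightarrow> g - monom 1 (m - k) * g_k m g k \<in> polys_lt (m - k)"
  unfolding polys_lt_def
  using degree_g by (auto simp: coeff_monom_mult coeff_g_k coeff_eq_0)

(* deg p_k < n: writing f = t^(m-k) f_k + F and g = t^(m-k) g_k + G, the top parts cancel and
   p_k = g_k F - f_k G. *)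
lemma p_k_in_polys_lt:
  assumes "k \<le> m"
  shows "p_k n m f g k \<in> polys_lt n"
proof -
  define F where "F = f - monom 1 (m - k) * f_k n m f k"
  define G where "G = g - monom 1 (m - k) * g_k m g k"
  have p_k_eq: "p_k n m f g k = g_k m g k * F - f_k n m f k * G"
    unfolding p_k_def F_def G_def by (simp add: algebra_simps)
  have "g_k m g k * F \<in> polys_lt (Suc k + (m - k) - 1)"
    using polys_lt_mult[OF g_k_in_polys_lt f_minus_f_k[OF assms]] by (simp add: F_def)
  then have "g_k m g k * F \<in> polys_lt n"
    using assms m_le_n by (auto elim: polys_lt_mono)
  moreover have "f_k n m f k * G \<in> polys_lt (Suc (n - m + k) + (m - k) - 1)"
    using polys_lt_mult[OF f_k_in_polys_lt g_minus_g_k[OF assms]] by (simp add: G_def)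
  then have "f_k n m f k * G \<in> polys_lt n"
    using assms m_le_n by (auto elim: polys_lt_mono)
  ultimately show ?thesis unfolding p_k_eq by (rule polys_lt_diff)
qed

lemma coker_N_subset_coker_M:
  assumes j: "j \<le> m" and x: "x \<in> coker_N n m f g j"
  shows "x \<in> coker_M n m j"
proof -
  obtain c a b where dom: "(c, a, b) \<in> psi_dom n m j" and x_eq: "x = psi n m f g j (c, a, b)"
    using x by (rule coker_N_E)
  have a: "a \<in> polys_lt (m - j)" and b: "b \<in> polys_lt (n - j)"
    using dom by (simp_all add: psi_dom_iff)
  have f: "f \<in> polys_lt (Suc n)" and g: "g \<in> polys_lt (Suc m)"
    using degree_f degree_g by (simp_all add: polys_lt_Suc)
  have "(\<Sum>i\<in>{1..j}. smult (c i) (p_k n m f g (m - j + i - 1))) \<in> polys_lt n"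
    using j by (intro polys_lt_sum polys_lt_smult p_k_in_polys_lt) auto
  then have "(\<Sum>i\<in>{1..j}. smult (c i) (p_k n m f g (m - j + i - 1))) \<in> polys_lt (m + n - j)"
    by (rule polys_lt_mono) (use j in simp)
  moreover have "a * f \<in> polys_lt (m + n - j)"
    using polys_lt_mult[OF a f] j by simp
  moreover have "b * g \<in> polys_lt (m + n - j)"
    using polys_lt_mult[OF b g] j m_le_n by (simp add: add.commute)
  ultimately show ?thesis
    unfolding x_eq psi_apply coker_M_def by (intro polys_lt_add)
qed

(* The images decrease, im psi_(j+1) <= im psi_j: the extra generator p_K = g_K f - f_K g
   (K = m-j-1) is absorbed into the coefficients of f and g. *)
lemma coker_N_Suc_subset:
  assumes j: "j < m" and x: "x \<in> coker_N n m f g (Suc j)"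
  shows "x \<in> coker_N n m f g j"
proof -
  obtain c a b where dom: "(c, a, b) \<in> psi_dom n m (Suc j)"
    and x_eq: "x = psi n m f g (Suc j) (c, a, b)"
    using x by (rule coker_N_E)
  define K where "K = m - Suc j"
  define c' where "c' = (\<lambda>i. if i = 0 then 0 else c (Suc i))"
  define a' where "a' = a + smult (c 1) (g_k m g K)"
  define b' where "b' = b - smult (c 1) (f_k n m f K)"
  have "x = psi n m f g j (c', a', b')"
    unfolding x_eq psi_Suc[OF j]
    by (simp add: c'_def a'_def b'_def K_def p_k_def psi_apply algebra_simps smult_diff_right)
  moreover have "(c', a', b') \<in> psi_dom n m j"
    unfolding psi_dom_iff
  proof (intro conjI allI impI)
    fix i assume "c' i \<noteq> 0"
    then show "i \<in> {1..j}" using dom by (auto simp: c'_def psi_dom_iff split: if_splits)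
  next
    have "g_k m g K \<in> polys_lt (m - j)"
      using g_k_in_polys_lt[of m g K] j by (simp add: K_def Suc_diff_Suc)
    moreover have "a \<in> polys_lt (m - j)" using dom by (auto simp: psi_dom_iff elim: polys_lt_mono)
    ultimately show "a' \<in> polys_lt (m - j)" unfolding a'_def by (intro polys_lt_add polys_lt_smult)
  next
    have "f_k n m f K \<in> polys_lt (n - j)"
      using f_k_in_polys_lt[of n m f K] j m_le_n by (simp add: K_def Suc_diff_Suc)
    moreover have "b \<in> polys_lt (n - j)" using dom by (auto simp: psi_dom_iff elim: polys_lt_mono)
    ultimately show "b' \<in> polys_lt (n - j)" unfolding b'_def by (intro polys_lt_diff polys_lt_smult)
  qed
  ultimately show ?thesis by (simp add: coker_N_I)
qed

(* The combination u t^(m-j-1) f + v t^(n-j-1) g = psi_j(0, u t^(m-j-1), v t^(n-j-1)); modulo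
   im psi_(j+1) every element of im psi_j is of this form, and its top coefficient is u a_n + v b_m. *)
definition top_comb :: "nat \<Rightarrow> 'a \<Rightarrow> 'a \<Rightarrow> 'a poly" where
  "top_comb j u v = monom u (m - Suc j) * f + monom v (n - Suc j) * g"

lemma top_comb_in_coker_N: "j < m \<Longrightarrow> top_comb j u v \<in> coker_N n m f g j"
  unfolding top_comb_def using m_le_n by (intro coker_N_ab polys_lt_monom) auto

lemma coeff_top_comb:
  assumes j: "j < m"
  shows "coeff (top_comb j u v) (m + n - Suc j) = u * coeff f n + v * coeff g m"
proof -
  define K where "K = m - Suc j"
  define L where "L = n - Suc j"
  have idx: "m + n - Suc j = K + n" "m + n - Suc j = L + m"
    using j m_le_n by (simp_all add: K_def L_def)
  have "coeff (monom u K * f) (m + n - Suc j) = u * coeff f n"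
    unfolding idx(1) by (simp add: coeff_monom_mult)
  moreover have "coeff (monom v L * g) (m + n - Suc j) = v * coeff g m"
    unfolding idx(2) by (simp add: coeff_monom_mult)
  ultimately show ?thesis by (simp add: top_comb_def K_def L_def)
qed

lemma smult_top_comb: "smult w (top_comb j u v) = top_comb j (w * u) (w * v)"
  unfolding top_comb_def by (simp add: smult_add_right smult_monom_mult)

lemma coeff_top_congruent:
  assumes j: "j < m" and "x - y \<in> coker_N n m f g (Suc j)"
  shows "coeff x (m + n - Suc j) = coeff y (m + n - Suc j)"
proof -
  have "x - y \<in> polys_lt (m + n - Suc j)"
    using coker_N_subset_coker_M[OF _ assms(2)] j by (simp add: coker_M_def)
  then show ?thesis using polys_lt_coeff by fastforce
qed

(* Modulo N_(j+1), every element of N_j is a combination top_comb j u v: the top terms of a and b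
   give top_comb, and what remains is psi_(j+1) of a shifted triple. *)
lemma coker_N_decompose:
  assumes j: "j < m" and x: "x \<in> coker_N n m f g j"
  obtains u v where "x - top_comb j u v \<in> coker_N n m f g (Suc j)"
proof -
  obtain c a b where dom: "(c, a, b) \<in> psi_dom n m j" and x_eq: "x = psi n m f g j (c, a, b)"
    using x by (rule coker_N_E)
  define K where "K = m - Suc j"
  define L where "L = n - Suc j"
  define u where "u = coeff a K"
  define v where "v = coeff b L"
  have c: "\<forall>i. c i \<noteq> 0 \<longrightarrow> i \<in> {1..j}" and a: "a \<in> polys_lt (Suc K)" and b: "b \<in> polys_lt (Suc L)"
    using dom j m_le_n by (auto simp: psi_dom_iff K_def L_def Suc_diff_Suc)
  define c' where "c' = (\<lambda>i. if i = 0 then 0 else c (i - 1))"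
  have "(c', a - monom u K, b - monom v L) \<in> psi_dom n m (Suc j)"
    unfolding psi_dom_iff
  proof (intro conjI allI impI)
    fix i assume "c' i \<noteq> 0"
    then show "i \<in> {1..Suc j}" using c by (auto simp: c'_def split: if_splits)
  next
    show "a - monom u K \<in> polys_lt (m - Suc j)" unfolding K_def[symmetric]
      by (rule polys_lt_drop_top) (auto intro: polys_lt_diff a polys_lt_monom simp: u_def)
    show "b - monom v L \<in> polys_lt (n - Suc j)" unfolding L_def[symmetric]
      by (rule polys_lt_drop_top) (auto intro: polys_lt_diff b polys_lt_monom simp: v_def)
  qed
  moreover have "c 0 = 0" and "(\<lambda>i. if i = 0 then 0 else c' (Suc i)) = c"
    using c by (auto simp: c'_def fun_eq_iff)
  then have "x - top_comb j u v = psi n m f g (Suc j) (c', a - monom u K, b - monom v L)"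
    unfolding x_eq psi_Suc[OF j] by (simp add: c'_def psi_apply top_comb_def K_def L_def algebra_simps)
  ultimately show ?thesis using that coker_N_I by metis
qed

(* The leading parts of f and g give b_m t^(m-j-1) f - a_n t^(n-j-1) g = p_K - (lower terms), which
   already lies in im psi_(j+1). *)
lemma lead_top_comb_in_coker_N_Suc:
  assumes j: "j < m"
  shows "top_comb j (coeff g m) (- coeff f n) \<in> coker_N n m f g (Suc j)"
proof -
  define K where "K = m - Suc j"
  define L where "L = n - Suc j"
  define c where "c = (\<lambda>i::nat. if i = 1 then (1::'a) else 0)"
  define a where "a = monom (coeff g m) K - g_k m g K"
  define b where "b = f_k n m f K - monom (coeff f n) L"
  have "(c, a, b) \<in> psi_dom n m (Suc j)"
    unfolding psi_dom_iff polys_lt_def using j m_le_n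
    by (auto simp: c_def a_def b_def K_def L_def coeff_g_k coeff_f_k coeff_monom)
  moreover have "(\<lambda>i. if i = 0 then 0 else c (Suc i)) = (\<lambda>_. 0)"
    by (auto simp: c_def)
  then have "top_comb j (coeff g m) (- coeff f n) = psi n m f g (Suc j) (c, a, b)"
    unfolding psi_Suc[OF j]
    by (simp add: c_def a_def b_def K_def L_def psi_apply top_comb_def p_k_def algebra_simps flip: minus_monom)
  ultimately show ?thesis by (simp add: coker_N_I)
qed

end

(* Additionally a_n = alpha d and b_m = beta d for a nonzerodivisor d, with x0 alpha + y0 beta = 1;
   this is what <a_n, b_m> = <d> amounts to (principal_generator_cofactors). *)
locale sylvester_cofactors = sylvester_pair f g n m
  for f g :: "'a::comm_ring_1 poly" and n m :: nat +
  fixes d \<alpha> \<beta> x0 y0 :: 'a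
  assumes nonzero_divisor: "\<forall>x. d * x = 0 \<longrightarrow> x = 0"
    and lead_f: "coeff f n = \<alpha> * d" and lead_g: "coeff g m = \<beta> * d"
    and bezout: "x0 * \<alpha> + y0 * \<beta> = 1"
begin

(* Q_j = beta t^(m-j-1) f - alpha t^(n-j-1) g generates the image of R/<d> in coker psi_(j+1), and
   lift_j = x0 t^(m-j-1) f + y0 t^(n-j-1) g is an element of N_j with top coefficient d. *)
definition Q :: "nat \<Rightarrow> 'a poly" where
  "Q j = top_comb j \<beta> (- \<alpha>)"

definition lift :: "nat \<Rightarrow> 'a poly" where
  "lift j = top_comb j x0 y0"

lemma coeff_top_comb_factor:
  "j < m \<Longrightarrow> coeff (top_comb j u v) (m + n - Suc j) = (u * \<alpha> + v * \<beta>) * d"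
  by (simp add: coeff_top_comb lead_f lead_g algebra_simps)

(* The top coefficient of any element of N_j lies in <d>, so coeff e_j induces M_j/N_j -> R/<d>. *)
lemma top_coeff_in_ideal:
  assumes j: "j < m" and x: "x \<in> coker_N n m f g j"
  shows "coeff x (m + n - Suc j) \<in> principal_ideal d"
proof -
  obtain u v where "x - top_comb j u v \<in> coker_N n m f g (Suc j)"
    using coker_N_decompose[OF j x] .
  then have "coeff x (m + n - Suc j) = (u * \<alpha> + v * \<beta>) * d"
    using coeff_top_congruent[OF j] coeff_top_comb_factor[OF j] by metis
  then show ?thesis unfolding principal_ideal_def by blast
qed

(* Q_j lies in N_j and, its top coefficient being beta alpha d - alpha beta d = 0, also in M_(j+1). *)
lemma Q_in_coker_N: "j < m \<Longrightarrow> Q j \<in> coker_N n m f g j"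
  unfolding Q_def by (rule top_comb_in_coker_N)

lemma Q_in_coker_M_Suc:
  assumes j: "j < m"
  shows "Q j \<in> coker_M n m (Suc j)"
proof -
  have "Q j \<in> polys_lt (Suc (m + n - Suc j))"
    using coker_N_subset_coker_M[OF _ Q_in_coker_N[OF j]] j by (simp add: coker_M_def Suc_diff_Suc)
  moreover have "coeff (Q j) (m + n - Suc j) = 0"
    using coeff_top_comb_factor[OF j] by (simp add: Q_def algebra_simps)
  ultimately show ?thesis unfolding coker_M_def by (rule polys_lt_drop_top)
qed

(* d Q_j = top_comb j b_m (-a_n) lies in N_(j+1); hence w |-> w Q_j is well defined on R/<d>. *)
lemma smult_d_Q_in_coker_N_Suc: "j < m \<Longrightarrow> smult d (Q j) \<in> coker_N n m f g (Suc j)"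
  using lead_top_comb_in_coker_N_Suc
  by (simp add: Q_def smult_top_comb lead_f lead_g mult.commute)

(* The kernel of the top coefficient on N_j is N_(j+1) + R Q_j: a vanishing top coefficient forces
   (u, v) to be a syzygy of (alpha, beta), hence a multiple of (beta, -alpha). *)
lemma coker_N_top_zero:
  assumes j: "j < m" and x: "x \<in> coker_N n m f g j" and top: "coeff x (m + n - Suc j) = 0"
  obtains w where "x - smult w (Q j) \<in> coker_N n m f g (Suc j)"
proof -
  obtain u v where uv: "x - top_comb j u v \<in> coker_N n m f g (Suc j)"
    using coker_N_decompose[OF j x] .
  then have "(u * \<alpha> + v * \<beta>) * d = 0"
    using coeff_top_congruent[OF j] coeff_top_comb_factor[OF j] top by metis
  then have "u * \<alpha> + v * \<beta> = 0" using nonzero_divisor by (simp add: mult.commute)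
  then have "top_comb j u v = smult (u * y0 - v * x0) (Q j)"
    using unimodular_syzygy[OF bezout] by (metis Q_def smult_top_comb)
  then show ?thesis using uv that by metis
qed

lemma lift_in_coker_N: "j < m \<Longrightarrow> lift j \<in> coker_N n m f g j"
  unfolding lift_def by (rule top_comb_in_coker_N)

lemma coeff_top_lift: "j < m \<Longrightarrow> coeff (lift j) (m + n - Suc j) = d"
  by (simp add: lift_def coeff_top_comb_factor bezout)

lemma qhom_multiple_of_Q:
  assumes j: "j < m"
  shows "qhom (*) UNIV (principal_ideal d) smult (coker_M n m (j + 1)) (coker_N n m f g (j + 1))
           (\<lambda>w. smult w (Q j))"
  unfolding qhom_def
proof (intro conjI allI subsetI)
  fix y assume "y \<in> (\<lambda>w. smult w (Q j)) ` principal_ideal d"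
  then obtain z where "y = smult z (smult d (Q j))" unfolding principal_ideal_def by auto
  then show "y \<in> coker_N n m f g (j + 1)"
    using coker_N_smult[OF smult_d_Q_in_coker_N_Suc[OF j]] by simp
qed (use Q_in_coker_M_Suc[OF j] in \<open>auto simp: smult_add_left coker_M_def intro: polys_lt_smult\<close>)

lemma qhom_inclusion:
  assumes j: "j < m"
  shows "qhom smult (coker_M n m (j + 1)) (coker_N n m f g (j + 1)) smult (coker_M n m j) (coker_N n m f g j) id"
  unfolding qhom_def coker_M_def using coker_N_Suc_subset[OF j]
  by (auto elim: polys_lt_mono)

lemma qhom_top_coeff:
  assumes j: "j < m"
  shows "qhom smult (coker_M n m j) (coker_N n m f g j) (*) UNIV (principal_ideal d)
           (\<lambda>x. coeff x (m + n - Suc j))"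
  unfolding qhom_def using top_coeff_in_ideal[OF j] by auto

lemma exact_at_coker_Suc:
  assumes j: "j < m"
  shows "qexact UNIV (coker_M n m (j + 1)) (coker_N n m f g (j + 1)) (coker_N n m f g j)
           (\<lambda>w. smult w (Q j)) id"
  unfolding qexact_def
proof (intro ballI iffI)
  fix x assume "x \<in> coker_M n m (j + 1)" and "id x \<in> coker_N n m f g j"
  moreover from this have "coeff x (m + n - Suc j) = 0"
    by (simp add: coker_M_def polys_lt_coeff)
  ultimately show "\<exists>w\<in>UNIV. x - smult w (Q j) \<in> coker_N n m f g (j + 1)"
    using coker_N_top_zero[OF j] by (metis Suc_eq_plus1 UNIV_I id_apply)
next
  fix x assume "\<exists>w\<in>UNIV. x - smult w (Q j) \<in> coker_N n m f g (j + 1)"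
  then obtain w where "x - smult w (Q j) \<in> coker_N n m f g (Suc j)" by auto
  then have "x - smult w (Q j) \<in> coker_N n m f g j" by (rule coker_N_Suc_subset[OF j])
  from coker_N_add[OF this coker_N_smult[OF Q_in_coker_N[OF j], of w]]
  show "id x \<in> coker_N n m f g j" by simp
qed

(* Exactness at coker psi_j: the top coefficient of x lies in <d> iff x comes from M_(j+1) modulo
   im psi_j; the correction term is a multiple of lift_j, whose top coefficient is d. *)
lemma exact_at_coker:
  assumes j: "j < m"
  shows "qexact (coker_M n m (j + 1)) (coker_M n m j) (coker_N n m f g j) (principal_ideal d)
           id (\<lambda>x. coeff x (m + n - Suc j))"
  unfolding qexact_def
proof (intro ballI iffI)
  fix x assume x: "x \<in> coker_M n m j" and "coeff x (m + n - Suc j) \<in> principal_ideal d"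
  then obtain z where z: "coeff x (m + n - Suc j) = z * d" unfolding principal_ideal_def by auto
  have lift: "smult z (lift j) \<in> coker_N n m f g j"
    using coker_N_smult[OF lift_in_coker_N[OF j]] .
  have "x - smult z (lift j) \<in> polys_lt (Suc (m + n - Suc j))"
    using x coker_N_subset_coker_M[OF _ lift] j by (simp add: coker_M_def Suc_diff_Suc polys_lt_diff)
  then have "x - smult z (lift j) \<in> polys_lt (m + n - Suc j)"
    by (rule polys_lt_drop_top) (simp add: z coeff_top_lift[OF j])
  then have "x - smult z (lift j) \<in> coker_M n m (j + 1)" by (simp add: coker_M_def)
  moreover have "x - id (x - smult z (lift j)) \<in> coker_N n m f g j" using lift by simp
  ultimately show "\<exists>y\<in>coker_M n m (j + 1). x - id y \<in> coker_N n m f g j" by blast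
next
  fix x assume "\<exists>y\<in>coker_M n m (j + 1). x - id y \<in> coker_N n m f g j"
  then obtain y where y: "y \<in> coker_M n m (j + 1)" and "x - y \<in> coker_N n m f g j" by auto
  then have "coeff (x - y) (m + n - Suc j) \<in> principal_ideal d" by (intro top_coeff_in_ideal[OF j])
  moreover have "coeff y (m + n - Suc j) = 0" using y by (simp add: coker_M_def polys_lt_coeff)
  ultimately show "coeff x (m + n - Suc j) \<in> principal_ideal d" by simp
qed

lemma top_coeff_qsurj:
  assumes j: "j < m"
  shows "qsurj (coker_M n m j) UNIV (principal_ideal d) (\<lambda>x. coeff x (m + n - Suc j))"
  unfolding qsurj_def
proof
  fix z :: 'a
  have "monom z (m + n - Suc j) \<in> coker_M n m j"
    unfolding coker_M_def using j by (intro polys_lt_monom) simp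
  moreover have "z - coeff (monom z (m + n - Suc j)) (m + n - Suc j) \<in> principal_ideal d"
    unfolding principal_ideal_def by (auto intro: exI[of _ 0])
  ultimately show "\<exists>x\<in>coker_M n m j. z - coeff x (m + n - Suc j) \<in> principal_ideal d" by blast
qed

lemma inclusion_qiso:
  assumes d: "d = 1" and j: "j < m"
  shows "qiso smult (coker_M n m (Suc j)) (coker_N n m f g (Suc j)) (coker_M n m j) (coker_N n m f g j)"
proof -
  define h where "h = (\<lambda>x. x - smult (coeff x (m + n - Suc j)) (lift j))"
  have h_M: "h x \<in> coker_M n m (Suc j)" if x: "x \<in> coker_M n m j" for x
  proof -
    have "h x \<in> polys_lt (Suc (m + n - Suc j))"
      using x coker_N_subset_coker_M[OF _ lift_in_coker_N[OF j]] j
      by (simp add: h_def coker_M_def Suc_diff_Suc polys_lt_diff polys_lt_smult)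
    then show ?thesis
      unfolding coker_M_def by (simp add: polys_lt_drop_top h_def coeff_top_lift[OF j] d)
  qed
  have h_N: "h x \<in> coker_N n m f g (Suc j)" if x: "x \<in> coker_N n m f g j" for x
  proof -
    have hx: "h x \<in> coker_N n m f g j"
      unfolding h_def by (intro coker_N_diff x coker_N_smult lift_in_coker_N j)
    have "h x \<in> coker_M n m (Suc j)" using h_M coker_N_subset_coker_M[OF _ x] j by simp
    then have "coeff (h x) (m + n - Suc j) = 0" by (simp add: coker_M_def polys_lt_coeff)
    then obtain w where "h x - smult w (Q j) \<in> coker_N n m f g (Suc j)"
      using coker_N_top_zero[OF j hx] by blast
    from coker_N_add[OF this coker_N_smult[OF smult_d_Q_in_coker_N_Suc[OF j], of w]]
    show ?thesis using d by simp
  qed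
  have "qhom smult (coker_M n m j) (coker_N n m f g j) smult (coker_M n m (Suc j)) (coker_N n m f g (Suc j)) h"
    unfolding qhom_def using h_M h_N by (auto simp: h_def smult_add_left smult_diff_right)
  moreover have "h x - x \<in> coker_N n m f g (Suc j)" if "x \<in> coker_M n m (Suc j)" for x
    using that by (simp add: h_def coker_M_def polys_lt_coeff coker_N_zero)
  moreover have "h y - y \<in> coker_N n m f g j" for y
    using coker_N_smult[OF lift_in_coker_N[OF j], of "- coeff y (m + n - Suc j)"] by (simp add: h_def)
  ultimately show ?thesis
    unfolding qiso_def using qhom_inclusion[OF j] by (intro exI[of _ id] exI[of _ h]) simp
qed

end

theorem theorem5p1:
  fixes f g :: "'a::comm_ring_1 poly" and n m :: nat and d :: 'a
  assumes "1 \<le> m" and "m \<le> n"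
    and "degree f \<le> n" and "degree g \<le> m"
    and "\<forall>x. d * x = 0 \<longrightarrow> x = 0" and "d \<noteq> 0"
    and "{x * coeff f n + y * coeff g m | x y. True} = principal_ideal d"
  shows "(\<forall>j<m. \<exists>h1 h2 h3.
            qhom (*) UNIV (principal_ideal d) smult (coker_M n m (j+1)) (coker_N n m f g (j+1)) h1 \<and>
            qhom smult (coker_M n m (j+1)) (coker_N n m f g (j+1)) smult (coker_M n m j) (coker_N n m f g j) h2 \<and>
            qhom smult (coker_M n m j) (coker_N n m f g j) (*) UNIV (principal_ideal d) h3 \<and>
            qexact UNIV (coker_M n m (j+1)) (coker_N n m f g (j+1)) (coker_N n m f g j) h1 h2 \<and>
            qexact (coker_M n m (j+1)) (coker_M n m j) (coker_N n m f g j) (principal_ideal d) h2 h3 \<and>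
            qsurj (coker_M n m j) UNIV (principal_ideal d) h3)
       \<and> (d = 1 \<longrightarrow> (\<forall>j\<le>m. \<forall>k\<le>m.
            qiso smult (coker_M n m j) (coker_N n m f g j) (coker_M n m k) (coker_N n m f g k)))"
proof -
  obtain \<alpha> \<beta> x0 y0 where "coeff f n = \<alpha> * d" "coeff g m = \<beta> * d" "x0 * \<alpha> + y0 * \<beta> = 1"
    using principal_generator_cofactors[OF assms(5,7)] .
  then interpret sylvester_cofactors f g n m d \<alpha> \<beta> x0 y0
    using assms(2-5) by unfold_locales
  have iso: "qiso smult (coker_M n m j) (coker_N n m f g j) (coker_M n m k) (coker_N n m f g k)"
    if "d = 1" "j \<le> m" "k \<le> m" for j k
    using qiso_chain[of "coker_N n m f g" m smult "coker_M n m" j k]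
      coker_N_zero coker_N_add inclusion_qiso[OF that(1)] that(2,3) by blast
  show ?thesis
    using qhom_multiple_of_Q qhom_inclusion qhom_top_coeff exact_at_coker_Suc exact_at_coker
      top_coeff_qsurj iso by blast
qed

end
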